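(* Let $M$ be a finite rectangular monoid, $k$ a field which is a splitting field for the maximal subgroups of $M$, and $X,Y\in\Lambda(M)$ incomparable. Let $A$ be a $k[G_Y\times G_X^{op}]$-module, regarded as an $M$-bimodule via $m\cdot a\cdot m'=\rho_Y(m)a\rho_X(m')$. Then $H^1(M,A)\cong\mathrm{Hom}_{k[G_Y\times G_X^{op}]}(V_{X,Y},A)$, where $V_{X,Y}=k[e_YMe_X]/W_{X,Y}$ and $W_{X,Y}$ is the subspace spanned by $\nabla Y\nabla X\cap e_YMe_X$ together with all elements $e_Ymne_X+e_Yme_Ye_Xne_X-e_Yme_Yne_X-e_Yme_Xne_X$ with $m,n\in M$.
   Context: $E(M)$ idempotents, $m^\omega$ idempotent power of $m$. $M$ rectangular: each $\{f\in E(M):MfM=MeM\}$ closed under multiplication. $\Lambda(M)$: ideals $MeM$, $e\in E(M)$, ordered by inclusion; $\sigma(m)=Mm^\omega M$; $\nabla X=\{m: X\not\subseteq MmM\}$, $\nabla Y\nabla X=\{ab:a\in\nabla Y,b\in\nabla X\}$. Fixed $e_X$ with $Me_XM=X$; $G_X$ = group of units of $e_XMe_X$; $\rho_X(m)=e_Xme_X$ if $X\subseteq\sigma(m)$ and $0\in kG_X$ otherwise. $W_{X,Y}$ is a $G_Y\times G_X^{op}$-submodule of $k[e_YMe_X]$ (left multiplication by $G_Y$, right by $G_X$). $H^1(M,A)$ is the space of derivations $d\colon M\to A$ ($d(mn)=md(n)+d(m)n$) modulo inner derivations $m\mapsto ma-am$. *)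

theory Defs
  imports Main "Jordan_Normal_Form.Matrix"
begin

definition idems :: "'m::monoid_mult set" where
  "idems = {e. e * e = e}"

definition ideal2 :: "'m::monoid_mult \<Rightarrow> 'm set" where
  "ideal2 m = {a * m * b | a b. True}"

definition rectangular :: "'m::monoid_mult itself \<Rightarrow> bool" where
  "rectangular _ \<longleftrightarrow>
     (\<forall>e\<in>(idems::'m set). \<forall>f\<in>idems. \<forall>g\<in>idems.
        ideal2 f = ideal2 e \<and> ideal2 g = ideal2 e \<longrightarrow> f * g \<in> idems \<and> ideal2 (f * g) = ideal2 e)"

definition Lambda :: "'m::monoid_mult set set" where
  "Lambda = {ideal2 e | e. e \<in> idems}"

definition omega :: "'m::monoid_mult \<Rightarrow> 'm" where
  "omega m = (THE e. e * e = e \<and> (\<exists>n\<ge>1. e = m ^ n))"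

definition sigma :: "'m::monoid_mult \<Rightarrow> 'm set" where
  "sigma m = ideal2 (omega m)"

definition nabla :: "'m::monoid_mult set \<Rightarrow> 'm set" where
  "nabla X = {m. \<not> X \<subseteq> ideal2 m}"

definition nabla_prod :: "'m::monoid_mult set \<Rightarrow> 'm set \<Rightarrow> 'm set" where
  "nabla_prod Y X = {a * b | a b. a \<in> nabla Y \<and> b \<in> nabla X}"

definition corner :: "'m::monoid_mult \<Rightarrow> 'm \<Rightarrow> 'm set" where
  "corner e f = {e * m * f | m. True}"

(* group of units of eMe (maximal subgroup at e) *)
definition units_corner :: "'m::monoid_mult \<Rightarrow> 'm set" where
  "units_corner e = {g \<in> corner e e. \<exists>h\<in>corner e e. g * h = e \<and> h * g = e}"

definition is_rep :: "'m::monoid_mult set \<Rightarrow> 'm \<Rightarrow> nat \<Rightarrow> ('m \<Rightarrow> 'k::field mat) \<Rightarrow> bool" where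
  "is_rep G e n \<rho> \<longleftrightarrow> (\<forall>g\<in>G. \<rho> g \<in> carrier_mat n n) \<and> \<rho> e = 1\<^sub>m n \<and>
     (\<forall>g\<in>G. \<forall>h\<in>G. \<rho> (g * h) = \<rho> g * \<rho> h)"

definition irreducible_rep :: "'m::monoid_mult set \<Rightarrow> 'm \<Rightarrow> nat \<Rightarrow> ('m \<Rightarrow> 'k::field mat) \<Rightarrow> bool" where
  "irreducible_rep G e n \<rho> \<longleftrightarrow> is_rep G e n \<rho> \<and> n > 0 \<and>
     (\<forall>U. U \<subseteq> carrier_vec n \<and> 0\<^sub>v n \<in> U \<and> (\<forall>u\<in>U. \<forall>v\<in>U. u + v \<in> U) \<and>
          (\<forall>c. \<forall>u\<in>U. c \<cdot>\<^sub>v u \<in> U) \<and> (\<forall>g\<in>G. \<forall>u\<in>U. \<rho> g *\<^sub>v u \<in> U)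
        \<longrightarrow> U = {0\<^sub>v n} \<or> U = carrier_vec n)"

definition splitting_field :: "'k::field itself \<Rightarrow> 'm::monoid_mult set \<Rightarrow> 'm \<Rightarrow> bool" where
  "splitting_field _ G e \<longleftrightarrow>
     (\<forall>n (\<rho>::'m \<Rightarrow> 'k mat). irreducible_rep G e n \<rho> \<longrightarrow>
        (\<forall>T\<in>carrier_mat n n. (\<forall>g\<in>G. T * \<rho> g = \<rho> g * T) \<longrightarrow> (\<exists>c. T = c \<cdot>\<^sub>m 1\<^sub>m n)))"

(* A is a k[G_Y x G_X^op]-module: a k-vector space with commuting linear
   left G_Y-action lY and right G_X-action rX *)
definition group_bimodule ::
  "('k::field \<Rightarrow> 'a::ab_group_add \<Rightarrow> 'a) \<Rightarrow> 'm::monoid_mult set \<Rightarrow> 'm \<Rightarrow> 'm set \<Rightarrow> 'm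
   \<Rightarrow> ('m \<Rightarrow> 'a \<Rightarrow> 'a) \<Rightarrow> ('a \<Rightarrow> 'm \<Rightarrow> 'a) \<Rightarrow> bool" where
  "group_bimodule sc GY eY GX eX lY rX \<longleftrightarrow> vector_space sc \<and>
     (\<forall>g\<in>GY. \<forall>a b. lY g (a + b) = lY g a + lY g b) \<and>
     (\<forall>g\<in>GY. \<forall>c a. lY g (sc c a) = sc c (lY g a)) \<and>
     (\<forall>a. lY eY a = a) \<and>
     (\<forall>g\<in>GY. \<forall>h\<in>GY. \<forall>a. lY (g * h) a = lY g (lY h a)) \<and>
     (\<forall>g\<in>GX. \<forall>a b. rX (a + b) g = rX a g + rX b g) \<and>
     (\<forall>g\<in>GX. \<forall>c a. rX (sc c a) g = sc c (rX a g)) \<and>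
     (\<forall>a. rX a eX = a) \<and>
     (\<forall>g\<in>GX. \<forall>h\<in>GX. \<forall>a. rX a (g * h) = rX (rX a g) h) \<and>
     (\<forall>g\<in>GY. \<forall>h\<in>GX. \<forall>a. lY g (rX a h) = rX (lY g a) h)"

(* the M-bimodule structure m.a.m' = rho_Y(m) a rho_X(m') *)
definition lact :: "'m::monoid_mult set \<Rightarrow> 'm \<Rightarrow> ('m \<Rightarrow> 'a::ab_group_add \<Rightarrow> 'a) \<Rightarrow> 'm \<Rightarrow> 'a \<Rightarrow> 'a" where
  "lact Y eY lY m a = (if Y \<subseteq> sigma m then lY (eY * m * eY) a else 0)"

definition ract :: "'m::monoid_mult set \<Rightarrow> 'm \<Rightarrow> ('a::ab_group_add \<Rightarrow> 'm \<Rightarrow> 'a) \<Rightarrow> 'a \<Rightarrow> 'm \<Rightarrow> 'a" where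
  "ract X eX rX a m = (if X \<subseteq> sigma m then rX a (eX * m * eX) else 0)"

definition derivations ::
  "'m::monoid_mult set \<Rightarrow> 'm \<Rightarrow> ('m \<Rightarrow> 'a::ab_group_add \<Rightarrow> 'a) \<Rightarrow> 'm set \<Rightarrow> 'm
   \<Rightarrow> ('a \<Rightarrow> 'm \<Rightarrow> 'a) \<Rightarrow> ('m \<Rightarrow> 'a) set" where
  "derivations Y eY lY X eX rX =
     {d. \<forall>m n. d (m * n) = lact Y eY lY m (d n) + ract X eX rX (d m) n}"

definition inner_derivations ::
  "'m::monoid_mult set \<Rightarrow> 'm \<Rightarrow> ('m \<Rightarrow> 'a::ab_group_add \<Rightarrow> 'a) \<Rightarrow> 'm set \<Rightarrow> 'm
   \<Rightarrow> ('a \<Rightarrow> 'm \<Rightarrow> 'a) \<Rightarrow> ('m \<Rightarrow> 'a) set" where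
  "inner_derivations Y eY lY X eX rX =
     {d. \<exists>a. \<forall>m. d m = lact Y eY lY m a - ract X eX rX a m}"

(* the free k-vector space k[S] on a finite S, as functions supported in S *)
definition freevs :: "'m set \<Rightarrow> ('m \<Rightarrow> 'k::field) set" where
  "freevs S = {f. \<forall>t. t \<notin> S \<longrightarrow> f t = 0}"

definition delta :: "'m \<Rightarrow> 'm \<Rightarrow> 'k::field" where
  "delta s = (\<lambda>t. if t = s then 1 else 0)"

(* action of (g,h) in G_Y x G_X^op on k[e_Y M e_X]: basis s |-> g s h *)
definition gact :: "'m::monoid_mult set \<Rightarrow> 'm \<Rightarrow> 'm \<Rightarrow> ('m \<Rightarrow> 'k::field) \<Rightarrow> 'm \<Rightarrow> 'k" where
  "gact S g h f = (\<lambda>t. \<Sum>s\<in>S. if g * s * h = t then f s else 0)"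

definition W_gen :: "'m::monoid_mult set \<Rightarrow> 'm \<Rightarrow> 'm set \<Rightarrow> 'm \<Rightarrow> ('m \<Rightarrow> 'k::field) set" where
  "W_gen X eX Y eY =
     {delta s | s. s \<in> nabla_prod Y X \<inter> corner eY eX} \<union>
     {(\<lambda>t. delta (eY * m * n * eX) t + delta (eY * m * eY * eX * n * eX) t
           - delta (eY * m * eY * n * eX) t - delta (eY * m * eX * n * eX) t) | m n. True}"

definition W_XY :: "'m::{monoid_mult,finite} set \<Rightarrow> 'm \<Rightarrow> 'm set \<Rightarrow> 'm \<Rightarrow> ('m \<Rightarrow> 'k::field) set" where
  "W_XY X eX Y eY = {f. \<exists>c. f = (\<lambda>t. \<Sum>w\<in>W_gen X eX Y eY. c w * w t)}"

(* Hom_{k[G_Y x G_X^op]}(V_{X,Y}, A) with V_{X,Y} = k[e_Y M e_X]/W_{X,Y}, realised as the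
   k[G_Y x G_X^op]-linear maps k[e_Y M e_X] -> A vanishing on W_{X,Y}
   (extended by 0 outside k[e_Y M e_X]) *)
definition Hom_V ::
  "('k::field \<Rightarrow> 'a::ab_group_add \<Rightarrow> 'a) \<Rightarrow> 'm::{monoid_mult,finite} set \<Rightarrow> 'm \<Rightarrow> 'm set \<Rightarrow> 'm
   \<Rightarrow> ('m \<Rightarrow> 'a \<Rightarrow> 'a) \<Rightarrow> ('a \<Rightarrow> 'm \<Rightarrow> 'a) \<Rightarrow> (('m \<Rightarrow> 'k) \<Rightarrow> 'a) set" where
  "Hom_V sc X eX Y eY lY rX =
     {\<Phi>. (\<forall>f\<in>freevs (corner eY eX). \<forall>f'\<in>freevs (corner eY eX).
            \<Phi> (\<lambda>t. f t + f' t) = \<Phi> f + \<Phi> f') \<and>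
         (\<forall>c. \<forall>f\<in>freevs (corner eY eX). \<Phi> (\<lambda>t. c * f t) = sc c (\<Phi> f)) \<and>
         (\<forall>f. f \<notin> freevs (corner eY eX) \<longrightarrow> \<Phi> f = 0) \<and>
         (\<forall>w\<in>W_XY X eX Y eY. \<Phi> w = 0) \<and>
         (\<forall>g\<in>units_corner eY. \<forall>h\<in>units_corner eX. \<forall>f\<in>freevs (corner eY eX).
            \<Phi> (gact (corner eY eX) g h f) = lY g (rX (\<Phi> f) h))}"

(* H^1(M,A) = Der/Inn is k-linearly isomorphic to H: there is a k-linear map from
   Der onto H whose kernel is exactly Inn *)
definition H1_iso ::
  "('k::field \<Rightarrow> 'a::ab_group_add \<Rightarrow> 'a) \<Rightarrow> ('m \<Rightarrow> 'a) set \<Rightarrow> ('m \<Rightarrow> 'a) set \<Rightarrow> ('b \<Rightarrow> 'a) set \<Rightarrow> bool" where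
  "H1_iso sc Der Inn H \<longleftrightarrow>
     (\<exists>\<Psi>. \<Psi> ` Der = H \<and>
       (\<forall>d\<in>Der. \<forall>d'\<in>Der. \<Psi> (\<lambda>m. d m + d' m) = (\<lambda>f. \<Psi> d f + \<Psi> d' f)) \<and>
       (\<forall>c. \<forall>d\<in>Der. \<Psi> (\<lambda>m. sc c (d m)) = (\<lambda>f. sc c (\<Psi> d f))) \<and>
       (\<forall>d\<in>Der. \<Psi> d = (\<lambda>f. 0) \<longleftrightarrow> d \<in> Inn))"

end

theory Submission
  imports Defs
begin

text \<open>
  Under the action \<open>m \<cdot> a \<cdot> m' = \<rho>\<^sub>Y(m) a \<rho>\<^sub>X(m')\<close>, every element of \<open>e\<^sub>YMe\<^sub>X \<subseteq> X \<inter> Y\<close>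
  acts by zero on both sides, because \<open>X\<close> and \<open>Y\<close> are incomparable. Hence inner derivations
  vanish on \<open>e\<^sub>YMe\<^sub>X\<close>, and restricting a derivation to \<open>e\<^sub>YMe\<^sub>X\<close> gives a
  \<open>G\<^sub>Y \<times> G\<^sub>X\<^sup>o\<^sup>p\<close>-equivariant map killing \<open>W\<^sub>X\<^sub>,\<^sub>Y\<close>; this is a linear map \<open>Der \<rightarrow> Hom(V\<^sub>X\<^sub>,\<^sub>Y, A)\<close>
  with kernel \<open>Inn\<close>, since a derivation \<open>d\<close> vanishing on \<open>e\<^sub>YMe\<^sub>X\<close> is inner, namely
  \<open>d(m) = -(m \<cdot> d(e\<^sub>X) - d(e\<^sub>X) \<cdot> m)\<close>.
  Conversely, for \<open>\<Phi>\<close> put \<open>\<phi>(m) = \<Phi>(e\<^sub>Yme\<^sub>X)\<close>: the two kinds of generators of \<open>W\<^sub>X\<^sub>,\<^sub>Y\<close> give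
  \<open>\<phi>(mn) = m\<phi>(n) + \<phi>(m)n - m\<phi>(1)n\<close>, so \<open>d(m) = \<phi>(m) - m\<phi>(1)\<close> is a derivation mapped to \<open>\<Phi>\<close>.
  Rectangularity is what makes \<open>\<rho>\<^sub>X\<close>, \<open>\<rho>\<^sub>Y\<close> multiplicative, so that the action is a bimodule at
  all: in a finite rectangular monoid, \<open>e \<in> Mm\<^sup>\<omega>M\<close> iff \<open>eme\<close> is a unit of \<open>eMe\<close>, and
  \<open>e(mn)e = (eme)(ene)\<close> whenever both are units.
\<close>

lemma ideal2_iff: "x \<in> ideal2 y \<longleftrightarrow> (\<exists>a b. x = a * y * b)"
  by (auto simp: ideal2_def)

lemma ideal2I: "x = a * y * b \<Longrightarrow> x \<in> ideal2 y"
  by (auto simp: ideal2_def)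

lemma mult_mem_ideal2 [simp]: "a * x * b \<in> ideal2 x"
  by (rule ideal2I) simp

lemma mult_left_mem_ideal2 [simp]: "a * x \<in> ideal2 x"
  using mult_mem_ideal2[of a x 1] by simp

lemma mult_right_mem_ideal2 [simp]: "x * a \<in> ideal2 x"
  using mult_mem_ideal2[of 1 x a] by simp

lemma ideal2_self [simp]: "x \<in> ideal2 x"
  using mult_mem_ideal2[of 1 x 1] by simp

lemma ideal2_trans: "x \<in> ideal2 y \<Longrightarrow> y \<in> ideal2 z \<Longrightarrow> x \<in> ideal2 z"
  unfolding ideal2_iff by (metis mult.assoc)

lemma ideal2_mono: "x \<in> ideal2 y \<Longrightarrow> ideal2 x \<subseteq> ideal2 y"
  using ideal2_trans by blast

lemma ideal2_subset_iff: "ideal2 x \<subseteq> ideal2 y \<longleftrightarrow> x \<in> ideal2 y"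
  using ideal2_mono ideal2_self by blast

lemma ideal2_eq_iff: "ideal2 x = ideal2 y \<longleftrightarrow> x \<in> ideal2 y \<and> y \<in> ideal2 x"
  using ideal2_mono ideal2_self by blast

lemma ideal2_mult_closed: "s \<in> ideal2 e \<Longrightarrow> a * s * b \<in> ideal2 e"
  using mult_mem_ideal2 ideal2_trans by blast

lemma ideal2_mult_leftD: "e \<in> ideal2 (a * x) \<Longrightarrow> e \<in> ideal2 x"
  using ideal2_trans mult_left_mem_ideal2 by blast

lemma ideal2_mult_rightD: "e \<in> ideal2 (x * a) \<Longrightarrow> e \<in> ideal2 x"
  using ideal2_trans mult_right_mem_ideal2 by blast

lemma idem_mult_left: "e * e = (e::'m::monoid_mult) \<Longrightarrow> e * (e * x) = e * x"
  by (simp add: mult.assoc[symmetric])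

lemma corner_absorb:
  fixes e f x :: "'m::monoid_mult"
  assumes e: "e * e = e" and f: "f * f = f" and x: "e * x * f = x"
  shows "e * x = x" "x * f = x"
proof -
  have "e * x = (e * e) * x * f" using x by (simp only: mult.assoc)
  then show "e * x = x" using e x by simp
  have "x * f = e * x * (f * f)" using x by (metis mult.assoc)
  then show "x * f = x" using f x by simp
qed

lemma corner_mem [simp]: "e * m * f \<in> corner e f"
  unfolding corner_def by blast

lemma mem_corner_iff:
  fixes e f x :: "'m::monoid_mult"
  assumes "e * e = e" and "f * f = f"
  shows "x \<in> corner e f \<longleftrightarrow> e * x * f = x"
proof
  assume "x \<in> corner e f"
  then obtain m where "x = e * m * f" unfolding corner_def by blast
  then show "e * x * f = x" using assms by (simp add: mult.assoc idem_mult_left)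
next
  assume "e * x * f = x"
  then show "x \<in> corner e f" using corner_mem[of e x f] by simp
qed

lemma idem_mem_units_corner: "e * e = (e::'m::monoid_mult) \<Longrightarrow> e \<in> units_corner e"
  using corner_mem[of e 1 e] unfolding units_corner_def by auto

lemma units_corner_absorb:
  fixes e :: "'m::monoid_mult"
  assumes "e * e = e" and "g \<in> units_corner e"
  shows "e * g * e = g"
  using assms mem_corner_iff unfolding units_corner_def by blast

lemma units_corner_idem_eq:
  fixes u g :: "'m::monoid_mult"
  assumes u: "u * u = u" and g: "g \<in> units_corner u" and gg: "g * g = g"
  shows "g = u"
proof -
  obtain h where gh: "g * h = u" using g unfolding units_corner_def by blast
  have "g * u = g" using corner_absorb[OF u u units_corner_absorb[OF u g]] by simp
  then have "g = g * (g * h)" using gh by simp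
  also have "\<dots> = g * h" using gg by (simp add: mult.assoc[symmetric])
  finally show ?thesis using gh by simp
qed

lemma corner_right_inverse_imp_left_inverse:
  fixes e :: "'m::{monoid_mult,finite}"
  assumes e: "e * e = e" and p: "e * p * e = p" and q: "e * q * e = q" and pq: "p * q = e"
  shows "q * p = e"
proof -
  let ?C = "corner e e"
  have absorb: "e * y = y" "y * e = y" if "y \<in> ?C" for y
    using that corner_absorb[OF e e] mem_corner_iff[OF e e] by blast+
  have "q * y \<in> ?C" if "y \<in> ?C" for y
  proof -
    have "e * (q * y) * e = (e * q) * (y * e)" by (simp only: mult.assoc)
    also have "\<dots> = q * y" using absorb[OF that] corner_absorb[OF e e q] by simp
    finally show ?thesis using mem_corner_iff[OF e e] by blast
  qed
  then have "(\<lambda>y. q * y) ` ?C \<subseteq> ?C" by blast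
  moreover have "inj_on (\<lambda>y. q * y) ?C"
  proof (rule inj_onI)
    fix y1 y2 assume y: "y1 \<in> ?C" "y2 \<in> ?C" "q * y1 = q * y2"
    then have "p * q * y1 = p * q * y2" by (simp add: mult.assoc)
    then show "y1 = y2" using pq absorb y by simp
  qed
  ultimately have "(\<lambda>y. q * y) ` ?C = ?C"
    by (intro endo_inj_surj) auto
  moreover have "e \<in> ?C" using mem_corner_iff[OF e e] e by simp
  ultimately obtain y where y: "y \<in> ?C" "q * y = e" by force
  have "p = p * q * y" using y corner_absorb[OF e e p] by (simp add: mult.assoc)
  also have "\<dots> = y" using pq absorb y by simp
  finally show ?thesis using y by simp
qed

lemma units_cornerI:
  fixes e :: "'m::{monoid_mult,finite}"
  assumes e: "e * e = e" and x: "e * x * e = x" and J: "e \<in> ideal2 x"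
  shows "x \<in> units_corner e"
proof -
  obtain s t where st: "e = s * x * t" using J by (auto simp: ideal2_iff)
  define s' where "s' = e * s * e"
  define t' where "t' = e * t * e"
  have ex: "e * x = x" using corner_absorb[OF e e x] by simp
  have "e = e * e * e" using e by simp
  also have "\<dots> = e * s * (e * x * e) * t * e" using st x by (simp add: mult.assoc)
  also have "\<dots> = s' * (x * t')" unfolding s'_def t'_def by (simp add: mult.assoc)
  finally have right1: "s' * (x * t') = e" by simp
  have s': "e * s' * e = s'" and t': "e * t' * e = t'" and ts': "e * (t' * s') * e = t' * s'"
    unfolding s'_def t'_def by (simp_all add: mult.assoc idem_mult_left[OF e] e)
  have "e * (x * t') * e = (e * x) * e * t * (e * e)" unfolding t'_def by (simp only: mult.assoc)
  then have "e * (x * t') * e = x * t'" unfolding t'_def by (simp add: ex e mult.assoc)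
  then have "x * t' * s' = e" using corner_right_inverse_imp_left_inverse[OF e s'] right1 by blast
  then have right2: "x * (t' * s') = e" by (simp add: mult.assoc)
  then have "t' * s' * x = e" using corner_right_inverse_imp_left_inverse[OF e x ts'] by blast
  then show ?thesis
    unfolding units_corner_def using right2 x ts' mem_corner_iff[OF e e] by blast
qed

lemma idem_power_eq: "x * x = (x::'m::monoid_mult) \<Longrightarrow> k \<ge> 1 \<Longrightarrow> x ^ k = x"
proof (induction k)
  case (Suc k) then show ?case by (cases k) auto
qed simp

lemma idempotent_power_exists:
  fixes m :: "'m::{monoid_mult,finite}"
  shows "\<exists>n\<ge>1. m ^ n * m ^ n = m ^ n"
proof -
  have "\<not> inj (\<lambda>k::nat. m ^ k)"
    using finite_imageD[of "\<lambda>k::nat. m ^ k" UNIV] finite_subset[OF subset_UNIV finite_UNIV] by auto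
  then obtain a b :: nat where ab: "a < b" "m ^ a = m ^ b"
    unfolding inj_def by (metis linorder_neq_iff)
  define p where "p = b - a"
  have p: "p \<ge> 1" using ab unfolding p_def by simp
  have period: "m ^ (c + q * p) = m ^ c" if "a \<le> c" for c q
  proof (induction q)
    case (Suc q)
    have "c + Suc q * p = (c + q * p - a) + b" using that ab unfolding p_def by simp
    then have "m ^ (c + Suc q * p) = m ^ (c + q * p - a) * m ^ b" by (simp add: power_add)
    also have "\<dots> = m ^ (c + q * p - a) * m ^ a" by (simp only: ab(2))
    also have "\<dots> = m ^ (c + q * p)" using that by (simp flip: power_add)
    finally show ?case using Suc by simp
  qed simp
  define n where "n = (a + 1) * p"
  have "(a + 1) * 1 \<le> n" unfolding n_def using p by (rule mult_le_mono2)
  moreover have "m ^ n * m ^ n = m ^ (n + (a + 1) * p)" unfolding n_def by (simp add: power_add)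
  ultimately show ?thesis using period[of n "a + 1"] by (intro exI[of _ n]) auto
qed

lemma idempotent_powers_eq:
  fixes m :: "'m::monoid_mult"
  assumes "a \<ge> 1" "b \<ge> 1" "m ^ a * m ^ a = m ^ a" "m ^ b * m ^ b = m ^ b"
  shows "m ^ a = m ^ b"
proof -
  have "m ^ a = (m ^ a) ^ b" using idem_power_eq assms by metis
  also have "\<dots> = (m ^ b) ^ a" by (simp add: mult.commute flip: power_mult)
  also have "\<dots> = m ^ b" using idem_power_eq assms by metis
  finally show ?thesis .
qed

lemma omega_idempotent_power:
  fixes m :: "'m::{monoid_mult,finite}"
  shows "omega m * omega m = omega m \<and> (\<exists>n\<ge>1. omega m = m ^ n)"
proof -
  obtain n where n: "n \<ge> 1" "m ^ n * m ^ n = m ^ n" using idempotent_power_exists by blast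
  show ?thesis unfolding omega_def
    by (rule theI[of _ "m ^ n"]) (use n in blast, use n idempotent_powers_eq in metis)
qed

lemma omega_idem: "omega m * omega (m::'m::{monoid_mult,finite}) = omega m"
  using omega_idempotent_power by blast

lemma omega_mem_ideal2: "omega (m::'m::{monoid_mult,finite}) \<in> ideal2 m"
proof -
  obtain n where n: "n \<ge> 1" "omega m = m ^ n" using omega_idempotent_power by blast
  then obtain k where "omega m = m * m ^ k" by (cases n) auto
  then show ?thesis by simp
qed

lemma mem_ideal2_omegaD: "e \<in> ideal2 (omega m) \<Longrightarrow> e \<in> ideal2 (m::'m::{monoid_mult,finite})"
  using ideal2_trans omega_mem_ideal2 by blast

section \<open>Finite rectangular monoids\<close>

lemma rectangularD:
  assumes "rectangular TYPE('m::monoid_mult)" "u * u = u" "v * v = v" "e * e = (e::'m)"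
    "ideal2 u = ideal2 e" "ideal2 v = ideal2 e"
  shows "u * v * (u * v) = u * v" "ideal2 (u * v) = ideal2 e"
  using assms unfolding rectangular_def idems_def by blast+

locale rectangular_idempotent =
  fixes e :: "'m::{monoid_mult,finite}"
  assumes rect: "rectangular TYPE('m)" and idem: "e * e = e"
begin

lemma right_inverse_exists:
  assumes a: "e * a = a" and J: "e \<in> ideal2 a"
  shows "\<exists>w. a * w = e"
proof -
  obtain s t where st: "e = s * a * t" using J by (auto simp: ideal2_iff)
  define y where "y = a * t * e"
  have "(e * s) * y = e * (s * a * t) * e" unfolding y_def by (simp only: mult.assoc)
  then have "e = (e * s) * y * 1" using st idem by simp
  moreover have "e * y * e = y" unfolding y_def using a idem by (simp add: mult.assoc flip: mult.assoc[of e a])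
  ultimately have "y \<in> units_corner e" using units_cornerI[OF idem] ideal2I by blast
  then obtain h where "y * h = e" unfolding units_corner_def by blast
  then have "a * (t * e * h) = e" unfolding y_def by (simp add: mult.assoc)
  then show ?thesis by blast
qed

lemma left_inverse_exists:
  assumes b: "b * e = b" and J: "e \<in> ideal2 b"
  shows "\<exists>z. z * b = e"
proof -
  obtain s t where st: "e = s * b * t" using J by (auto simp: ideal2_iff)
  define y where "y = e * s * b"
  have "y * (t * e) = e * (s * b * t) * e" unfolding y_def by (simp only: mult.assoc)
  then have "e = 1 * y * (t * e)" using st idem by simp
  moreover have "e * y * e = y" unfolding y_def using b idem by (simp add: mult.assoc idem_mult_left)
  ultimately have "y \<in> units_corner e" using units_cornerI[OF idem] ideal2I by blast
  then obtain h where "h * y = e" unfolding units_corner_def by blast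
  then have "(h * e * s) * b = e" unfolding y_def by (simp add: mult.assoc)
  then show ?thesis by blast
qed

text \<open>The idempotents of the \<open>\<J>\<close>-class of \<open>e\<close> form a rectangular band.\<close>

lemma J_idempotents_sandwich:
  assumes u: "u * u = u" "ideal2 u = ideal2 e" and v: "v * v = v" "ideal2 v = ideal2 e"
  shows "u * v * u = u"
proof -
  note uv = rectangularD[OF rect u(1) v(1) idem u(2) v(2)]
  note uvu = rectangularD[OF rect uv(1) u(1) idem uv(2) u(2)]
  have "u * (u * v * u) * u = u * v * u" using u by (simp add: mult.assoc idem_mult_left)
  moreover have "u \<in> ideal2 (u * v * u)" using uvu(2) u(2) ideal2_self by metis
  ultimately have "u * v * u \<in> units_corner u" using units_cornerI[OF u(1)] by blast
  then show ?thesis using units_corner_idem_eq[OF u(1) _ uvu(1)] by blast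
qed

lemma J_idempotents_middle:
  assumes u: "u * u = u" "ideal2 u = ideal2 e" and v: "v * v = v" "ideal2 v = ideal2 e"
    and z: "z * z = z" "ideal2 z = ideal2 e"
  shows "u * z * v = u * v"
proof -
  note zv = rectangularD[OF rect z(1) v(1) idem z(2) v(2)]
  have "u * z * v = u * z * (v * u * v)" using J_idempotents_sandwich[OF v u] by simp
  also have "\<dots> = (u * (z * v) * u) * v" by (simp add: mult.assoc)
  also have "\<dots> = u * v" using J_idempotents_sandwich[OF u zv] by simp
  finally show ?thesis .
qed

lemma J_idempotent_of_right_inverse:
  assumes a: "e * a = a" and w: "a * w = e"
  shows "w * a * (w * a) = w * a" "ideal2 (w * a) = ideal2 e" "a * (w * a) = a"
proof -
  show "w * a * (w * a) = w * a" using w a by (simp add: mult.assoc flip: mult.assoc[of a w])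
  show al: "a * (w * a) = a" using w a by (simp flip: mult.assoc)
  have "w * a \<in> ideal2 e" using ideal2_mult_closed[of a e w 1] a mult_right_mem_ideal2[of e a] by simp
  moreover have "e \<in> ideal2 (w * a)" using ideal2I[of e a "w * a" w] al w by simp
  ultimately show "ideal2 (w * a) = ideal2 e" using ideal2_eq_iff by blast
qed

lemma J_idempotent_of_left_inverse:
  assumes b: "b * e = b" and z: "z * b = e"
  shows "b * z * (b * z) = b * z" "ideal2 (b * z) = ideal2 e" "b * z * b = b"
proof -
  show "b * z * (b * z) = b * z" using z b by (metis mult.assoc)
  show rb: "b * z * b = b" using z b by (simp add: mult.assoc)
  have "b * z \<in> ideal2 e" using ideal2_mult_closed[of b e 1 z] b mult_left_mem_ideal2[of b e] by simp
  moreover have "e \<in> ideal2 (b * z)" using ideal2I[of e z "b * z" b] rb z by (simp add: mult.assoc)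
  ultimately show "ideal2 (b * z) = ideal2 e" using ideal2_eq_iff by blast
qed

text \<open>By rectangularity, the product of the idempotents \<open>wa\<close> and \<open>bz\<close> stays in the \<open>\<J>\<close>-class of \<open>e\<close>.\<close>

lemma mem_ideal2_mult:
  assumes a: "e * a = a" "e \<in> ideal2 a" and b: "b * e = b" "e \<in> ideal2 b"
  shows "e \<in> ideal2 (a * b)"
proof -
  obtain w where w: "a * w = e" using right_inverse_exists[OF a] by blast
  obtain z where z: "z * b = e" using left_inverse_exists[OF b] by blast
  note l = J_idempotent_of_right_inverse[OF a(1) w]
  note r = J_idempotent_of_left_inverse[OF b(1) z]
  have "ideal2 (w * a * (b * z)) = ideal2 e" using rectangularD[OF rect l(1) r(1) idem l(2) r(2)] by simp
  moreover have "w * a * (b * z) \<in> ideal2 (a * b)" using mult_mem_ideal2[of w "a * b" z] by (simp add: mult.assoc)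
  ultimately show ?thesis using ideal2_trans ideal2_self by metis
qed

lemma mult_eq_mult_idem_mult:
  assumes a: "e * a = a" "e \<in> ideal2 a" and b: "b * e = b" "e \<in> ideal2 b"
  shows "a * b = a * e * b"
proof -
  obtain w where w: "a * w = e" using right_inverse_exists[OF a] by blast
  obtain z where z: "z * b = e" using left_inverse_exists[OF b] by blast
  note l = J_idempotent_of_right_inverse[OF a(1) w]
  note r = J_idempotent_of_left_inverse[OF b(1) z]
  have "a * e * b = (a * (w * a)) * e * ((b * z) * b)" using l(3) r(3) by simp
  also have "\<dots> = a * ((w * a) * e * (b * z)) * b" by (simp only: mult.assoc)
  also have "\<dots> = a * ((w * a) * (b * z)) * b"
    using J_idempotents_middle[OF l(1,2) r(1,2) idem refl] by simp
  also have "\<dots> = (a * (w * a)) * ((b * z) * b)" by (simp only: mult.assoc)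
  finally show ?thesis using l(3) r(3) by simp
qed

lemma ideal2_corner_iff_left: "e \<in> ideal2 (e * m * e) \<longleftrightarrow> e \<in> ideal2 (e * m)"
proof
  assume "e \<in> ideal2 (e * m)"
  moreover have "e * (e * m) = e * m" using idem by (rule idem_mult_left)
  ultimately show "e \<in> ideal2 (e * m * e)" using mem_ideal2_mult[of "e * m" e] idem by simp
qed (rule ideal2_mult_rightD)

lemma ideal2_corner_iff_right: "e \<in> ideal2 (e * m * e) \<longleftrightarrow> e \<in> ideal2 (m * e)"
proof
  assume "e \<in> ideal2 (m * e)"
  moreover have "m * e * e = m * e" using idem by (simp add: mult.assoc)
  ultimately have "e \<in> ideal2 (e * (m * e))" using mem_ideal2_mult[of e "m * e"] idem by simp
  then show "e \<in> ideal2 (e * m * e)" by (simp add: mult.assoc)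
next
  assume "e \<in> ideal2 (e * m * e)"
  then show "e \<in> ideal2 (m * e)" using ideal2_mult_leftD[of e e "m * e"] by (simp add: mult.assoc)
qed

lemma ideal2_corner_imp_ideal2_omega:
  assumes J: "e \<in> ideal2 (e * m * e)"
  shows "e \<in> ideal2 (omega m)"
proof -
  have me: "e \<in> ideal2 (m * e)" using J ideal2_corner_iff_right by blast
  have powers: "e \<in> ideal2 (e * m ^ Suc k)" for k
  proof (induction k)
    case 0
    then show ?case using J ideal2_corner_iff_left by simp
  next
    case (Suc k)
    have "e * (e * m ^ Suc k) = e * m ^ Suc k" using idem by (rule idem_mult_left)
    moreover have "m * e * e = m * e" using idem by (simp add: mult.assoc)
    ultimately have "e \<in> ideal2 (e * m ^ Suc k * (m * e))" using mem_ideal2_mult Suc me by blast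
    moreover have "e * m ^ Suc k * (m * e) = e * m ^ Suc (Suc k) * e"
      by (simp only: power_Suc2[of m "Suc k"] mult.assoc)
    ultimately show ?case using ideal2_mult_rightD by metis
  qed
  obtain n where n: "n \<ge> 1" "omega m = m ^ n" using omega_idempotent_power by blast
  then obtain j where "n = Suc j" by (cases n) auto
  then show ?thesis using powers[of j] n ideal2_mult_leftD by metis
qed

lemma ideal2_omega_imp_ideal2_corner:
  assumes J: "e \<in> ideal2 (omega m)"
  shows "e \<in> ideal2 (e * m * e)"
proof -
  define f where "f = omega m"
  have ff: "f * f = f" unfolding f_def using omega_idem .
  obtain n where n: "n \<ge> 1" "f = m ^ n" unfolding f_def using omega_idempotent_power by blast
  obtain x y where xy: "e = x * f * y" using J unfolding f_def by (auto simp: ideal2_iff)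
  \<comment> \<open>\<open>g = u v\<close> is an idempotent of the \<open>\<J>\<close>-class of \<open>e\<close> fixed by \<open>f\<close> on both sides\<close>
  define u where "u = f * y * e"
  define v where "v = e * x * f"
  define g where "g = u * v"
  have "v * u = e * (x * f * y) * e" unfolding u_def v_def using ff by (simp add: mult.assoc idem_mult_left)
  then have vu: "v * u = e" using xy idem by simp
  have ue: "u * e = u" unfolding u_def using idem by (simp add: mult.assoc)
  have "g * g = u * (v * u) * v" unfolding g_def by (simp only: mult.assoc)
  then have gg: "g * g = g" unfolding g_def using vu ue by simp
  have "v * g * u = (v * u) * (v * u)" unfolding g_def by (simp only: mult.assoc)
  then have "e = v * g * u" using vu idem by simp
  moreover have "g \<in> ideal2 e" unfolding g_def u_def v_def using mult_mem_ideal2[of "f * y" e "x * f"]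
    by (simp add: mult.assoc idem_mult_left[OF idem])
  ultimately have gJ: "ideal2 g = ideal2 e" using ideal2_eq_iff ideal2I by metis
  have fg: "f * g = g" unfolding g_def u_def using ff by (simp flip: mult.assoc)
  have gf: "g * f = g" unfolding g_def v_def using ff by (simp add: mult.assoc)
  have "ideal2 (e * g) = ideal2 e" using rectangularD[OF rect idem gg idem refl gJ] by simp
  then have ef: "e \<in> ideal2 (e * f)" using fg ideal2_mult_rightD[of e "e * f" g] by (simp add: mult.assoc)
  have "ideal2 (g * e) = ideal2 e" using rectangularD[OF rect gg idem idem gJ refl] by simp
  moreover have "g * (f * e) = g * e" using gf by (simp flip: mult.assoc)
  ultimately have fe: "e \<in> ideal2 (f * e)" using ideal2_mult_leftD[of e g "f * e"] by simp
  have "e \<in> ideal2 (e * f * (f * e))"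
    by (rule mem_ideal2_mult) (use ef fe idem in \<open>simp_all add: mult.assoc idem_mult_left\<close>)
  moreover have "e * f * (f * e) = e * (f * f) * e" by (simp only: mult.assoc)
  ultimately have "e \<in> ideal2 (e * f * e)" by (simp only: ff)
  then have efe: "e \<in> ideal2 (e * m ^ n * e)" by (simp only: n(2))
  obtain j where "n = Suc j" using n by (cases n) auto
  then have "e * m ^ n * e = (e * m) * (m ^ j * e)" by (simp add: mult.assoc)
  then have "e \<in> ideal2 (e * m)" using efe ideal2_mult_rightD by metis
  then show ?thesis using ideal2_corner_iff_left by blast
qed

lemma ideal2_omega_iff: "e \<in> ideal2 (omega m) \<longleftrightarrow> e \<in> ideal2 (e * m * e)"
  using ideal2_corner_imp_ideal2_omega ideal2_omega_imp_ideal2_corner by blast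

lemma corner_mem_units_corner: "e \<in> ideal2 (omega m) \<Longrightarrow> e * m * e \<in> units_corner e"
  using ideal2_omega_iff units_cornerI[OF idem] idem by (simp add: mult.assoc idem_mult_left)

lemma units_corner_ideal2_omega: "g \<in> units_corner e \<Longrightarrow> e \<in> ideal2 (omega g)"
  unfolding ideal2_omega_iff units_corner_absorb[OF idem]
  by (auto simp: units_corner_def intro: ideal2I[of e 1 g])

lemma ideal2_omega_mult_iff:
  "e \<in> ideal2 (omega (m * n)) \<longleftrightarrow> e \<in> ideal2 (omega m) \<and> e \<in> ideal2 (omega n)"
proof -
  have "e \<in> ideal2 ((e * m) * (n * e)) \<longleftrightarrow> e \<in> ideal2 (e * m) \<and> e \<in> ideal2 (n * e)"
  proof
    assume "e \<in> ideal2 (e * m) \<and> e \<in> ideal2 (n * e)"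
    moreover have "e * (e * m) = e * m" "n * e * e = n * e"
      using idem by (simp_all add: mult.assoc idem_mult_left)
    ultimately show "e \<in> ideal2 ((e * m) * (n * e))" using mem_ideal2_mult idem by blast
  qed (use ideal2_mult_rightD ideal2_mult_leftD in blast)
  moreover have "e * (m * n) * e = (e * m) * (n * e)" by (simp only: mult.assoc)
  ultimately show ?thesis
    using ideal2_corner_iff_left[of m] ideal2_corner_iff_right[of n] by (simp add: ideal2_omega_iff)
qed

lemma corner_mult:
  assumes "e \<in> ideal2 (omega m)" "e \<in> ideal2 (omega n)"
  shows "e * (m * n) * e = (e * m * e) * (e * n * e)"
proof -
  have "e \<in> ideal2 (e * m)" "e \<in> ideal2 (n * e)"
    using assms ideal2_omega_iff ideal2_corner_iff_left ideal2_corner_iff_right by blast+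
  moreover have "e * (e * m) = e * m" "n * e * e = n * e"
    using idem by (simp_all add: mult.assoc idem_mult_left)
  ultimately have "(e * m) * (n * e) = (e * m) * e * (n * e)"
    using mult_eq_mult_idem_mult by blast
  then show ?thesis using idem by (simp add: mult.assoc idem_mult_left)
qed

end

section \<open>The free vector space \<open>k[e\<^sub>YMe\<^sub>X]\<close>\<close>

lemma delta_freevs: "s \<in> S \<Longrightarrow> delta s \<in> freevs S"
  unfolding freevs_def delta_def by auto

lemma freevs_add: "f \<in> freevs S \<Longrightarrow> g \<in> freevs S \<Longrightarrow> (\<lambda>t. f t + g t) \<in> freevs S"
  and freevs_diff: "f \<in> freevs S \<Longrightarrow> g \<in> freevs S \<Longrightarrow> (\<lambda>t. f t - g t) \<in> freevs S"
  and freevs_scale: "f \<in> freevs S \<Longrightarrow> (\<lambda>t. c * f t) \<in> freevs S"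
  unfolding freevs_def by auto

lemma freevs_sum: "(\<And>i. i \<in> I \<Longrightarrow> g i \<in> freevs S) \<Longrightarrow> (\<lambda>t. \<Sum>i\<in>I. c i * g i t) \<in> freevs S"
  unfolding freevs_def by auto

lemma delta_sum_expansion:
  assumes "finite S" and "f \<in> freevs S"
  shows "f = (\<lambda>t. \<Sum>s\<in>S. f s * delta s t)"
proof
  fix t
  have "(\<Sum>s\<in>S. f s * delta s t) = (\<Sum>s\<in>S. if s = t then f t else 0)"
    by (rule sum.cong) (auto simp: delta_def)
  then show "f t = (\<Sum>s\<in>S. f s * delta s t)" using assms by (auto simp: freevs_def)
qed

lemma gact_delta:
  assumes "finite S" and "s \<in> S"
  shows "gact S g h (delta s) = delta (g * s * h)"
proof
  fix t
  have "gact S g h (delta s) t = (\<Sum>s'\<in>S. if s' = s then (if g * s' * h = t then 1 else 0) else 0)"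
    unfolding gact_def by (rule sum.cong) (auto simp: delta_def)
  then show "gact S g h (delta s) t = delta (g * s * h) t" using assms by (auto simp: delta_def)
qed

lemma W_relation_mem_corner:
  "eY * m * n * eX \<in> corner eY eX" "eY * m * eY * eX * n * eX \<in> corner eY eX"
  "eY * m * eY * n * eX \<in> corner eY eX" "eY * m * eX * n * eX \<in> corner eY eX"
  using corner_mem[of eY "m * n" eX] corner_mem[of eY "m * eY * eX * n" eX]
    corner_mem[of eY "m * eY * n" eX] corner_mem[of eY "m * eX * n" eX]
  by (simp_all add: mult.assoc)

lemma W_gen_cases:
  assumes "w \<in> W_gen X eX Y eY"
  obtains s where "w = delta s" "s \<in> nabla_prod Y X" "s \<in> corner eY eX"
  | m n where "w = (\<lambda>t. delta (eY * m * n * eX) t + delta (eY * m * eY * eX * n * eX) t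
                     - delta (eY * m * eY * n * eX) t - delta (eY * m * eX * n * eX) t)"
  using assms unfolding W_gen_def by blast

lemma finite_W_gen: "finite (W_gen X eX Y eY :: ('m::{monoid_mult,finite} \<Rightarrow> 'k::field) set)"
proof -
  let ?rel = "\<lambda>(m, n). (\<lambda>t. delta (eY * m * n * eX) t + delta (eY * m * eY * eX * n * eX) t
     - delta (eY * m * eY * n * eX) t - delta (eY * m * eX * n * eX) t) :: 'm \<Rightarrow> 'k"
  have "W_gen X eX Y eY \<subseteq> range delta \<union> range ?rel"
    unfolding W_gen_def by auto
  then show ?thesis by (rule finite_subset) simp
qed

lemma W_gen_freevs: "w \<in> W_gen X eX Y eY \<Longrightarrow> w \<in> freevs (corner eY eX)"
  by (erule W_gen_cases) (simp_all add: delta_freevs freevs_add freevs_diff W_relation_mem_corner)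

lemma W_gen_subset_W_XY: "W_gen X eX Y eY \<subseteq> (W_XY X eX Y eY :: ('m::{monoid_mult,finite} \<Rightarrow> 'k::field) set)"
proof
  fix w :: "'m \<Rightarrow> 'k" assume w: "w \<in> W_gen X eX Y eY"
  have "(\<Sum>w'\<in>W_gen X eX Y eY. (if w' = w then 1 else 0) * w' t) = w t" for t
  proof -
    have "(\<Sum>w'\<in>W_gen X eX Y eY. (if w' = w then 1 else 0) * w' t)
        = (\<Sum>w'\<in>W_gen X eX Y eY. if w' = w then w t else 0)"
      by (rule sum.cong) auto
    then show ?thesis using w sum.delta[OF finite_W_gen, of w "\<lambda>_. w t"] by simp
  qed
  then have "w = (\<lambda>t. \<Sum>w'\<in>W_gen X eX Y eY. (if w' = w then 1 else 0) * w' t)" by simp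
  then show "w \<in> W_XY X eX Y eY"
    unfolding W_XY_def mem_Collect_eq by (rule exI[of _ "\<lambda>w'. if w' = w then 1 else 0"])
qed

locale incomparable_bimodule =
  fixes sc :: "'k::field \<Rightarrow> 'a::ab_group_add \<Rightarrow> 'a"
    and X Y :: "'m::{monoid_mult,finite} set"
    and eX eY :: 'm
    and lY :: "'m \<Rightarrow> 'a \<Rightarrow> 'a"
    and rX :: "'a \<Rightarrow> 'm \<Rightarrow> 'a"
  assumes rect: "rectangular TYPE('m)"
    and eX_idem: "eX * eX = eX" and eY_idem: "eY * eY = eY"
    and X_eq: "ideal2 eX = X" and Y_eq: "ideal2 eY = Y"
    and X_not_subset_Y: "\<not> X \<subseteq> Y" and Y_not_subset_X: "\<not> Y \<subseteq> X"
    and bimodule: "group_bimodule sc (units_corner eY) eY (units_corner eX) eX lY rX"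
begin

sublocale RX: rectangular_idempotent eX using rect eX_idem by unfold_locales
sublocale RY: rectangular_idempotent eY using rect eY_idem by unfold_locales
sublocale V: vector_space sc using bimodule unfolding group_bimodule_def by blast

abbreviation "GY \<equiv> units_corner eY"
abbreviation "GX \<equiv> units_corner eX"
abbreviation "C \<equiv> corner eY eX"
abbreviation "l \<equiv> lact Y eY lY"
abbreviation "r \<equiv> ract X eX rX"

lemma lY_hom: "g \<in> GY \<Longrightarrow> module_hom sc sc (lY g)"
  using bimodule V.module_axioms unfolding group_bimodule_def
  by (auto intro!: module_hom.intro module_hom_axioms.intro)

lemma rX_hom: "h \<in> GX \<Longrightarrow> module_hom sc sc (\<lambda>a. rX a h)"
  using bimodule V.module_axioms unfolding group_bimodule_def
  by (auto intro!: module_hom.intro module_hom_axioms.intro)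

lemma lY_unit: "lY eY a = a"
  and lY_mult: "g \<in> GY \<Longrightarrow> h \<in> GY \<Longrightarrow> lY (g * h) a = lY g (lY h a)"
  and rX_unit: "rX a eX = a"
  and lY_rX_commute: "g \<in> GY \<Longrightarrow> h \<in> GX \<Longrightarrow> lY g (rX a h) = rX (lY g a) h"
  using bimodule unfolding group_bimodule_def by blast+

lemma lact_eq: "l m a = (if eY \<in> ideal2 (omega m) then lY (eY * m * eY) a else 0)"
  unfolding lact_def sigma_def Y_eq[symmetric] ideal2_subset_iff ..

lemma ract_eq: "r a m = (if eX \<in> ideal2 (omega m) then rX a (eX * m * eX) else 0)"
  unfolding ract_def sigma_def X_eq[symmetric] ideal2_subset_iff ..

lemma zero_hom: "module_hom sc sc (\<lambda>a. 0)"
  using V.module_axioms by (auto intro!: module_hom.intro module_hom_axioms.intro)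

lemma lact_hom: "module_hom sc sc (l m)"
proof -
  have "l m = (if eY \<in> ideal2 (omega m) then lY (eY * m * eY) else (\<lambda>a. 0))"
    by (simp add: fun_eq_iff lact_eq)
  then show ?thesis using lY_hom[OF RY.corner_mem_units_corner] zero_hom by simp
qed

lemma ract_hom: "module_hom sc sc (\<lambda>a. r a m)"
proof -
  have "(\<lambda>a. r a m) = (if eX \<in> ideal2 (omega m) then (\<lambda>a. rX a (eX * m * eX)) else (\<lambda>a. 0))"
    by (simp add: fun_eq_iff ract_eq)
  then show ?thesis using rX_hom[OF RX.corner_mem_units_corner] zero_hom by simp
qed

lemma lact_mult: "l (m * n) a = l m (l n a)"
  using RY.ideal2_omega_mult_iff[of m n] RY.corner_mult[of m n]
    RY.corner_mem_units_corner[of m] RY.corner_mem_units_corner[of n]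
  by (auto simp: lact_eq lY_mult module_hom.zero[OF lY_hom])

lemma lact_ract_commute: "l m (r a n) = r (l m a) n"
  using RY.corner_mem_units_corner[of m] RX.corner_mem_units_corner[of n]
  by (auto simp: lact_eq ract_eq lY_rX_commute module_hom.zero[OF lY_hom] module_hom.zero[OF rX_hom])

lemma lact_units_corner: "g \<in> GY \<Longrightarrow> l g a = lY g a"
  using RY.units_corner_ideal2_omega by (simp add: lact_eq units_corner_absorb[OF eY_idem])

lemma ract_units_corner: "h \<in> GX \<Longrightarrow> r a h = rX a h"
  using RX.units_corner_ideal2_omega by (simp add: ract_eq units_corner_absorb[OF eX_idem])

lemma lact_idem: "l eY a = a"
  using lact_units_corner[OF idem_mem_units_corner[OF eY_idem]] lY_unit by simp

lemma ract_idem: "r a eX = a"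
  using ract_units_corner[OF idem_mem_units_corner[OF eX_idem]] rX_unit by simp

lemma lact_nabla:
  assumes "s \<in> nabla Y"
  shows "l s a = 0"
proof -
  have "eY \<notin> ideal2 s" using assms unfolding nabla_def Y_eq[symmetric] ideal2_subset_iff by simp
  then show ?thesis using mem_ideal2_omegaD by (auto simp: lact_eq)
qed

lemma ract_nabla:
  assumes "s \<in> nabla X"
  shows "r a s = 0"
proof -
  have "eX \<notin> ideal2 s" using assms unfolding nabla_def X_eq[symmetric] ideal2_subset_iff by simp
  then show ?thesis using mem_ideal2_omegaD by (auto simp: ract_eq)
qed

lemma X_subset_nabla_Y: "X \<subseteq> nabla Y"
  unfolding nabla_def using X_eq Y_eq Y_not_subset_X ideal2_mono by blast

lemma Y_subset_nabla_X: "Y \<subseteq> nabla X"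
  unfolding nabla_def using X_eq Y_eq X_not_subset_Y ideal2_mono by blast

lemma eX_mem_X: "eX \<in> X"
  using X_eq by auto

lemma eY_mem_Y: "eY \<in> Y"
  using Y_eq by auto

lemma lact_X: "s \<in> X \<Longrightarrow> l s a = 0"
  using X_subset_nabla_Y lact_nabla by blast

lemma ract_Y: "s \<in> Y \<Longrightarrow> r a s = 0"
  using Y_subset_nabla_X ract_nabla by blast

lemma mem_C_iff: "s \<in> C \<longleftrightarrow> eY * s * eX = s"
  using mem_corner_iff[OF eY_idem eX_idem] .

lemma C_subset_X: "s \<in> C \<Longrightarrow> s \<in> X"
  unfolding corner_def X_eq[symmetric] by auto

lemma C_subset_Y: "s \<in> C \<Longrightarrow> s \<in> Y"
  unfolding corner_def Y_eq[symmetric] by (auto simp: mult.assoc)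

lemma units_mult_mem_C:
  assumes "g \<in> GY" and "h \<in> GX" and "s \<in> C"
  shows "g * s * h \<in> C"
proof -
  have "eY * g = g" using corner_absorb[OF eY_idem eY_idem units_corner_absorb[OF eY_idem]] assms by blast
  moreover have "h * eX = h" using corner_absorb[OF eX_idem eX_idem units_corner_absorb[OF eX_idem]] assms by blast
  ultimately show ?thesis using mem_C_iff by (metis corner_mem mult.assoc)
qed

abbreviation "Der \<equiv> derivations Y eY lY X eX rX"
abbreviation "Inn \<equiv> inner_derivations Y eY lY X eX rX"

lemma derivationD: "d \<in> Der \<Longrightarrow> d (x * y) = l x (d y) + r (d x) y"
  unfolding derivations_def by blast

lemma derivation_W_relation:
  assumes d: "d \<in> Der"
  shows "d (eY * m * n * eX) + d (eY * m * eY * eX * n * eX) - d (eY * m * eY * n * eX)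
           - d (eY * m * eX * n * eX) = 0"
proof -
  define p where "p = eY * m"
  define q where "q = n * eX"
  note D = derivationD[OF d]
  have l_eY: "l (x * eY) a = l x a" and l_eX: "l (x * eX) a = 0" for x a
    by (simp_all add: lact_mult lact_idem lact_X eX_mem_X module_hom.zero[OF lact_hom])
  have r_eY: "r a eY = 0" for a using ract_Y eY_mem_Y by blast
  have "eY * m * n * eX = p * q" "eY * m * eY * n * eX = (p * eY) * q"
    "eY * m * eX * n * eX = (p * eX) * q" "eY * m * eY * eX * n * eX = (p * eY * eX) * q"
    unfolding p_def q_def by (simp_all add: mult.assoc)
  moreover have "d (p * q) = l p (d q) + r (d p) q" by (rule D)
  moreover have "d (p * eY * q) = l p (d q) + r (l p (d eY)) q"
    using D[of "p * eY" q] D[of p eY] l_eY r_eY by simp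
  moreover have "d (p * eX * q) = r (l p (d eX) + d p) q"
    using D[of "p * eX" q] D[of p eX] l_eX ract_idem by simp
  moreover have "d (p * eY * eX * q) = r (l p (d eX) + l p (d eY)) q"
    using D[of "p * eY * eX" q] D[of "p * eY" eX] D[of p eY] l_eY l_eX r_eY ract_idem by simp
  ultimately show ?thesis by (simp add: module_hom.add[OF ract_hom])
qed

lemma derivation_nabla_prod:
  assumes "d \<in> Der" and "s \<in> nabla_prod Y X"
  shows "d s = 0"
  using assms derivationD lact_nabla ract_nabla unfolding nabla_prod_def by fastforce

lemma derivation_equivariant:
  assumes d: "d \<in> Der" and g: "g \<in> GY" and h: "h \<in> GX" and s: "s \<in> C"
  shows "d (g * s * h) = lY g (rX (d s) h)"
proof -
  have "s * h \<in> Y" using ideal2_mult_closed[of s eY 1 h] C_subset_Y[OF s] Y_eq by simp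
  then have "d (g * (s * h)) = l g (d (s * h))" using derivationD[OF d] ract_Y by simp
  moreover have "d (s * h) = r (d s) h" using derivationD[OF d] lact_X C_subset_X[OF s] by simp
  ultimately show ?thesis using lact_units_corner[OF g] ract_units_corner[OF h] by (simp add: mult.assoc)
qed

lemma inner_derivation_vanishes_on_C: "d \<in> Inn \<Longrightarrow> s \<in> C \<Longrightarrow> d s = 0"
  unfolding inner_derivations_def using C_subset_X C_subset_Y lact_X ract_Y by fastforce

lemma derivation_inner_if_vanishes_on_C:
  assumes d: "d \<in> Der" and C0: "\<And>s. s \<in> C \<Longrightarrow> d s = 0"
  shows "d \<in> Inn"
proof -
  note D = derivationD[OF d]
  have "d eY + d eX = 0"
    using D[of eY eX] C0[of "eY * eX"] corner_mem[of eY 1 eX] lact_idem ract_idem by (simp add: add.commute)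
  then have eY_eX: "d eY = - d eX" by (simp add: eq_neg_iff_add_eq_0)
  have "d m = l m (- d eX) - r (- d eX) m" for m
  proof -
    have "0 = d (eY * m * eX)" using C0 by simp
    also have "\<dots> = l m (d eX) + d m + r (d eY) m"
      using D[of "eY * m" eX] D[of eY m] lact_mult lact_idem ract_idem by simp
    finally show ?thesis
      using eY_eX by (simp add: module_hom.neg[OF lact_hom] module_hom.neg[OF ract_hom] algebra_simps
          eq_neg_iff_add_eq_0 flip: add.assoc)
  qed
  then show ?thesis unfolding inner_derivations_def by blast
qed

lemma gact_freevs: "g \<in> GY \<Longrightarrow> h \<in> GX \<Longrightarrow> gact C g h f \<in> freevs C"
  unfolding freevs_def gact_def using units_mult_mem_C by (auto intro!: sum.neutral)

section \<open>From derivations to homomorphisms\<close>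

definition hom_of_der :: "('m \<Rightarrow> 'a) \<Rightarrow> ('m \<Rightarrow> 'k) \<Rightarrow> 'a" where
  "hom_of_der d f = (if f \<in> freevs C then \<Sum>s\<in>C. sc (f s) (d s) else 0)"

lemma hom_of_der_delta:
  assumes "s \<in> C"
  shows "hom_of_der d (delta s) = d s"
proof -
  have "(\<Sum>t\<in>C. sc (delta s t) (d t)) = (\<Sum>t\<in>C. if s = t then d t else 0)"
    by (rule sum.cong) (auto simp: delta_def)
  then show ?thesis using assms by (simp add: hom_of_der_def delta_freevs)
qed

lemma hom_of_der_add:
  "f \<in> freevs C \<Longrightarrow> g \<in> freevs C \<Longrightarrow> hom_of_der d (\<lambda>t. f t + g t) = hom_of_der d f + hom_of_der d g"
  unfolding hom_of_der_def by (simp add: freevs_add V.scale_left_distrib sum.distrib)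

lemma hom_of_der_diff:
  "f \<in> freevs C \<Longrightarrow> g \<in> freevs C \<Longrightarrow> hom_of_der d (\<lambda>t. f t - g t) = hom_of_der d f - hom_of_der d g"
  unfolding hom_of_der_def by (simp add: freevs_diff V.scale_left_diff_distrib sum_subtractf)

lemma hom_of_der_scale: "f \<in> freevs C \<Longrightarrow> hom_of_der d (\<lambda>t. c * f t) = sc c (hom_of_der d f)"
  unfolding hom_of_der_def by (simp add: freevs_scale V.scale_sum_right)

lemma hom_of_der_lincomb:
  assumes "finite I" and "\<And>i. i \<in> I \<Longrightarrow> g i \<in> freevs C"
  shows "hom_of_der d (\<lambda>t. \<Sum>i\<in>I. c i * g i t) = (\<Sum>i\<in>I. sc (c i) (hom_of_der d (g i)))"
proof -
  have "(\<Sum>s\<in>C. sc (\<Sum>i\<in>I. c i * g i s) (d s)) = (\<Sum>i\<in>I. \<Sum>s\<in>C. sc (c i) (sc (g i s) (d s)))"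
    by (simp add: V.scale_sum_left sum.swap[of _ C])
  then show ?thesis unfolding hom_of_der_def using assms freevs_sum[of I g C c]
    by (simp add: V.scale_sum_right)
qed

lemma hom_of_der_gact:
  assumes d: "d \<in> Der" and g: "g \<in> GY" and h: "h \<in> GX" and f: "f \<in> freevs C"
  shows "hom_of_der d (gact C g h f) = lY g (rX (hom_of_der d f) h)"
proof -
  have "(\<Sum>t\<in>C. sc (gact C g h f t) (d t)) = (\<Sum>s\<in>C. \<Sum>t\<in>C. if g * s * h = t then sc (f s) (d t) else 0)"
    unfolding gact_def V.scale_sum_left by (subst sum.swap) (intro sum.cong refl; simp)
  also have "\<dots> = (\<Sum>s\<in>C. sc (f s) (lY g (rX (d s) h)))"
    using units_mult_mem_C[OF g h] derivation_equivariant[OF d g h] by simp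
  also have "\<dots> = lY g (rX (\<Sum>s\<in>C. sc (f s) (d s)) h)"
    by (simp add: module_hom.sum[OF lY_hom[OF g]] module_hom.sum[OF rX_hom[OF h]]
        module_hom.scale[OF lY_hom[OF g]] module_hom.scale[OF rX_hom[OF h]])
  finally show ?thesis unfolding hom_of_der_def using f by (simp add: gact_freevs[OF g h])
qed

lemma hom_of_der_W_gen:
  assumes d: "d \<in> Der" and w: "w \<in> W_gen X eX Y eY"
  shows "hom_of_der d w = 0"
  using w
proof (cases rule: W_gen_cases)
  case (1 s)
  then show ?thesis using hom_of_der_delta derivation_nabla_prod[OF d] by simp
next
  case (2 m n)
  then show ?thesis using derivation_W_relation[OF d, of m n]
    by (simp add: hom_of_der_diff hom_of_der_add freevs_add freevs_diff delta_freevs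
        hom_of_der_delta W_relation_mem_corner)
qed

lemma hom_of_der_mem_Hom_V:
  assumes d: "d \<in> Der"
  shows "hom_of_der d \<in> Hom_V sc X eX Y eY lY rX"
proof -
  have "hom_of_der d w = 0" if w: "w \<in> W_XY X eX Y eY" for w
  proof -
    obtain c where c: "w = (\<lambda>t. \<Sum>w'\<in>W_gen X eX Y eY. c w' * w' t)" using w unfolding W_XY_def by blast
    have "hom_of_der d w = (\<Sum>w'\<in>W_gen X eX Y eY. sc (c w') (hom_of_der d w'))"
      unfolding c by (rule hom_of_der_lincomb[where g = "\<lambda>w. w"]) (simp_all add: finite_W_gen W_gen_freevs)
    then show ?thesis using hom_of_der_W_gen[OF d] by simp
  qed
  then show ?thesis unfolding Hom_V_def
    using hom_of_der_add hom_of_der_scale hom_of_der_gact[OF d] by (auto simp: hom_of_der_def)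
qed

lemma hom_of_der_add_der: "hom_of_der (\<lambda>m. d m + d' m) = (\<lambda>f. hom_of_der d f + hom_of_der d' f)"
  unfolding hom_of_der_def by (auto simp: V.scale_right_distrib sum.distrib)

lemma hom_of_der_scale_der: "hom_of_der (\<lambda>m. sc c (d m)) = (\<lambda>f. sc c (hom_of_der d f))"
  unfolding hom_of_der_def by (auto simp: V.scale_sum_right mult.commute)

lemma hom_of_der_eq_0_iff: "hom_of_der d = (\<lambda>f. 0) \<longleftrightarrow> (\<forall>s\<in>C. d s = 0)"
proof
  assume "hom_of_der d = (\<lambda>f. 0)"
  then show "\<forall>s\<in>C. d s = 0" using hom_of_der_delta by metis
qed (simp add: hom_of_der_def fun_eq_iff)

section \<open>From homomorphisms to derivations\<close>

definition der_of_hom :: "(('m \<Rightarrow> 'k) \<Rightarrow> 'a) \<Rightarrow> 'm \<Rightarrow> 'a" where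
  "der_of_hom \<Phi> m = \<Phi> (delta (eY * m * eX)) - l m (\<Phi> (delta (eY * eX)))"

context
  fixes \<Phi> :: "('m \<Rightarrow> 'k) \<Rightarrow> 'a"
  assumes \<Phi>: "\<Phi> \<in> Hom_V sc X eX Y eY lY rX"
begin

lemma Phi_add: "f \<in> freevs C \<Longrightarrow> g \<in> freevs C \<Longrightarrow> \<Phi> (\<lambda>t. f t + g t) = \<Phi> f + \<Phi> g"
  and Phi_scale: "f \<in> freevs C \<Longrightarrow> \<Phi> (\<lambda>t. c * f t) = sc c (\<Phi> f)"
  and Phi_outside: "f \<notin> freevs C \<Longrightarrow> \<Phi> f = 0"
  and Phi_W_XY: "w \<in> W_XY X eX Y eY \<Longrightarrow> \<Phi> w = 0"
  using \<Phi> unfolding Hom_V_def by blast+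

lemma Phi_gact: "g \<in> GY \<Longrightarrow> h \<in> GX \<Longrightarrow> f \<in> freevs C \<Longrightarrow> \<Phi> (gact C g h f) = lY g (rX (\<Phi> f) h)"
  using \<Phi> unfolding Hom_V_def by blast

lemma Phi_diff:
  assumes f: "f \<in> freevs C" and g: "g \<in> freevs C"
  shows "\<Phi> (\<lambda>t. f t - g t) = \<Phi> f - \<Phi> g"
  using Phi_add[OF f freevs_scale[OF g, of "- 1"]] Phi_scale[OF g, of "- 1"] by simp

lemma Phi_zero: "\<Phi> (\<lambda>t. 0) = 0"
proof -
  have "(\<lambda>t. 0::'k) \<in> freevs C" by (simp add: freevs_def)
  then show ?thesis using Phi_scale[of "\<lambda>t. 0" 0] by simp
qed

lemma Phi_lincomb_delta: "S \<subseteq> C \<Longrightarrow> \<Phi> (\<lambda>t. \<Sum>s\<in>S. f s * delta s t) = (\<Sum>s\<in>S. sc (f s) (\<Phi> (delta s)))"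
proof (induction S rule: infinite_finite_induct)
  case (insert x F)
  have x: "x \<in> C" and F: "F \<subseteq> C" using insert.prems by auto
  have "(\<lambda>t. \<Sum>s\<in>F. f s * delta s t) \<in> freevs C" using F by (intro freevs_sum[where g = delta] delta_freevs) blast
  then have "\<Phi> (\<lambda>t. f x * delta x t + (\<Sum>s\<in>F. f s * delta s t))
      = \<Phi> (\<lambda>t. f x * delta x t) + \<Phi> (\<lambda>t. \<Sum>s\<in>F. f s * delta s t)"
    by (rule Phi_add[OF freevs_scale[OF delta_freevs[OF x]]])
  also have "\<dots> = sc (f x) (\<Phi> (delta x)) + (\<Sum>s\<in>F. sc (f s) (\<Phi> (delta s)))"
    using Phi_scale[OF delta_freevs[OF x]] insert.IH[OF F] by simp
  finally show ?case using insert.hyps by simp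
qed (simp_all add: Phi_zero)

lemma Phi_eq_hom_of_der:
  assumes d: "\<And>s. s \<in> C \<Longrightarrow> d s = \<Phi> (delta s)"
  shows "hom_of_der d = \<Phi>"
proof
  fix f
  show "hom_of_der d f = \<Phi> f"
  proof (cases "f \<in> freevs C")
    case True
    have "\<Phi> f = \<Phi> (\<lambda>t. \<Sum>s\<in>C. f s * delta s t)" using delta_sum_expansion[OF finite True] by (rule arg_cong)
    also have "\<dots> = (\<Sum>s\<in>C. sc (f s) (\<Phi> (delta s)))" using Phi_lincomb_delta by simp
    finally show ?thesis using True d by (simp add: hom_of_der_def)
  qed (simp add: hom_of_der_def Phi_outside)
qed

lemma Phi_nabla_prod: "s \<in> nabla_prod Y X \<Longrightarrow> s \<in> C \<Longrightarrow> \<Phi> (delta s) = 0"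
  using Phi_W_XY W_gen_subset_W_XY unfolding W_gen_def by blast

text \<open>
  If \<open>eme\<close> is not a unit, the basis element lies in \<open>\<nabla>Y\<nabla>X\<close> and both sides vanish.
\<close>

lemma Phi_delta_lact: "\<Phi> (delta (eY * m * eY * n * eX)) = l m (\<Phi> (delta (eY * n * eX)))"
proof (cases "eY \<in> ideal2 (omega m)")
  case True
  have "eY * m * eY * n * eX = (eY * m * eY) * (eY * n * eX) * eX"
    using eX_idem eY_idem by (simp add: mult.assoc idem_mult_left)
  then show ?thesis
    using True Phi_gact[OF RY.corner_mem_units_corner idem_mem_units_corner[OF eX_idem]
        delta_freevs[OF corner_mem]]
    by (simp add: gact_delta[OF finite] lact_eq rX_unit)
next
  case False
  have "eY * m * eY \<in> nabla Y"
    using RY.ideal2_omega_iff False unfolding nabla_def Y_eq[symmetric] ideal2_subset_iff by auto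
  moreover have "eY * (n * eX) \<in> nabla X" using Y_subset_nabla_X Y_eq by auto
  moreover have "eY * m * eY * n * eX = (eY * m * eY) * (eY * (n * eX))"
    using eY_idem by (simp add: mult.assoc idem_mult_left)
  ultimately have "eY * m * eY * n * eX \<in> nabla_prod Y X" unfolding nabla_prod_def by blast
  then show ?thesis using Phi_nabla_prod False W_relation_mem_corner(3)[of eY m n eX] by (simp add: lact_eq)
qed

lemma Phi_delta_ract: "\<Phi> (delta (eY * m * eX * n * eX)) = r (\<Phi> (delta (eY * m * eX))) n"
proof (cases "eX \<in> ideal2 (omega n)")
  case True
  have "eY * m * eX * n * eX = eY * (eY * m * eX) * (eX * n * eX)"
    using eX_idem eY_idem by (simp add: mult.assoc idem_mult_left)
  then show ?thesis
    using True Phi_gact[OF idem_mem_units_corner[OF eY_idem] RX.corner_mem_units_corner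
        delta_freevs[OF corner_mem]]
    by (simp add: gact_delta[OF finite] ract_eq lY_unit)
next
  case False
  have "eX * n * eX \<in> nabla X"
    using RX.ideal2_omega_iff False unfolding nabla_def X_eq[symmetric] ideal2_subset_iff by auto
  moreover have "(eY * m) * eX \<in> nabla Y" using X_subset_nabla_Y X_eq by auto
  moreover have "eY * m * eX * n * eX = ((eY * m) * eX) * (eX * n * eX)"
    using eX_idem by (simp add: mult.assoc idem_mult_left)
  ultimately have "eY * m * eX * n * eX \<in> nabla_prod Y X" unfolding nabla_prod_def by blast
  then show ?thesis using Phi_nabla_prod False W_relation_mem_corner(4)[of eY m eX n] by (simp add: ract_eq)
qed

lemma Phi_delta_mult:
  "\<Phi> (delta (eY * (m * n) * eX)) = l m (\<Phi> (delta (eY * n * eX))) + r (\<Phi> (delta (eY * m * eX))) n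
     - l m (r (\<Phi> (delta (eY * eX))) n)"
proof -
  define w :: "'m \<Rightarrow> 'k" where "w = (\<lambda>t. delta (eY * m * n * eX) t + delta (eY * m * eY * eX * n * eX) t
     - delta (eY * m * eY * n * eX) t - delta (eY * m * eX * n * eX) t)"
  have "w \<in> W_gen X eX Y eY" unfolding W_gen_def w_def by blast
  then have "\<Phi> w = 0" using Phi_W_XY W_gen_subset_W_XY by blast
  moreover have "\<Phi> w = \<Phi> (delta (eY * m * n * eX)) + \<Phi> (delta (eY * m * eY * eX * n * eX))
      - \<Phi> (delta (eY * m * eY * n * eX)) - \<Phi> (delta (eY * m * eX * n * eX))"
    unfolding w_def by (simp add: Phi_diff Phi_add freevs_add freevs_diff delta_freevs W_relation_mem_corner)
  moreover have "\<Phi> (delta (eY * m * eY * eX * n * eX)) = l m (r (\<Phi> (delta (eY * eX))) n)"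
  proof -
    have "eY * m * eY * eX * n * eX = eY * m * eY * (eX * n) * eX"
      and "eY * (eX * n) * eX = eY * 1 * eX * n * eX" by (simp_all only: mult.assoc mult_1_right)
    then show ?thesis using Phi_delta_lact[of m "eX * n"] Phi_delta_ract[of 1 n] by simp
  qed
  moreover have "eY * (m * n) * eX = eY * m * n * eX" by (simp only: mult.assoc)
  ultimately show ?thesis using Phi_delta_lact[of m n] Phi_delta_ract[of m n]
    by (simp add: algebra_simps)
qed

lemma der_of_hom_derivation: "der_of_hom \<Phi> \<in> Der"
  unfolding derivations_def mem_Collect_eq
proof (intro allI)
  fix m n
  show "der_of_hom \<Phi> (m * n) = l m (der_of_hom \<Phi> n) + r (der_of_hom \<Phi> m) n"
    unfolding der_of_hom_def Phi_delta_mult lact_mult lact_ract_commute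
      module_hom.diff[OF lact_hom] module_hom.diff[OF ract_hom]
    by (simp add: algebra_simps)
qed

lemma hom_of_der_der_of_hom: "hom_of_der (der_of_hom \<Phi>) = \<Phi>"
  by (rule Phi_eq_hom_of_der) (simp add: der_of_hom_def mem_C_iff lact_X C_subset_X)

end

end

theorem mainTheorem14:
  fixes sc :: "'k::field \<Rightarrow> 'a::ab_group_add \<Rightarrow> 'a"
    and X Y :: "'m::{monoid_mult,finite} set"
    and eX eY :: 'm
    and lY :: "'m \<Rightarrow> 'a \<Rightarrow> 'a"
    and rX :: "'a \<Rightarrow> 'm \<Rightarrow> 'a"
  assumes "rectangular TYPE('m)"
    and "\<forall>e\<in>idems. splitting_field TYPE('k) (units_corner e) (e::'m)"
    and "X \<in> Lambda" and "Y \<in> Lambda" and "\<not> X \<subseteq> Y" and "\<not> Y \<subseteq> X"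
    and "eX \<in> idems" and "ideal2 eX = X" and "eY \<in> idems" and "ideal2 eY = Y"
    and "group_bimodule sc (units_corner eY) eY (units_corner eX) eX lY rX"
  shows "H1_iso sc (derivations Y eY lY X eX rX) (inner_derivations Y eY lY X eX rX)
           (Hom_V sc X eX Y eY lY rX)"
proof -
  interpret incomparable_bimodule sc X Y eX eY lY rX
    using assms unfolding idems_def by unfold_locales auto
  have "hom_of_der ` Der = Hom_V sc X eX Y eY lY rX"
  proof
    show "hom_of_der ` Der \<subseteq> Hom_V sc X eX Y eY lY rX" using hom_of_der_mem_Hom_V by blast
    show "Hom_V sc X eX Y eY lY rX \<subseteq> hom_of_der ` Der"
      using der_of_hom_derivation hom_of_der_der_of_hom by (metis image_eqI subsetI)
  qed
  moreover have "hom_of_der d = (\<lambda>f. 0) \<longleftrightarrow> d \<in> Inn" if "d \<in> Der" for d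
    using that hom_of_der_eq_0_iff inner_derivation_vanishes_on_C derivation_inner_if_vanishes_on_C
    by blast
  ultimately show ?thesis
    unfolding H1_iso_def using hom_of_der_add_der hom_of_der_scale_der by blast
qed

end
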